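(* Let $\delta>0$, let $(x^\star,u^\star)$ satisfy $f(x^\star)+g(x^\star)u^\star=0$, $g^\star:=g(x^\star)$, $\mathcal{C}:=(g^\star)^\top Q$. Let $K_P,K_I\in\mathbb{R}^{m\times m}$ be symmetric positive definite, $K_D\in\mathbb{R}^{m\times m}$ symmetric positive semidefinite, and $\xi^\star:=-K_I^{-1}u^\star$. Consider the closed-loop discrete-time system, whose solutions are sequences $(x_k,\xi_k,u_k)_{k\in\mathbb{N}}$ satisfying for all $k$ $$x_{k+1}=x_k+\delta f(z_k)+\delta g(z_k)u_k,\quad \xi_{k+1}=\xi_k+\delta\tilde y_k,\quad u_k=-K_P\tilde y_k-\tfrac12K_I(\xi_{k+1}+\xi_k)-\tfrac1\delta K_D\mathcal{C}(x_{k+1}-x_k),$$ where $z_k:=\tfrac12(x_{k+1}+x_k)$, $\tilde y_k:=\mathcal{C}(z_k-x^\star)$. Then: (i) The equilibrium $(x^\star,\xi^\star)$ of the closed loop is globally stable: it is Lyapunov stable and every solution is bounded; more precisely, $V_k:=\frac1\delta\big[\tfrac12(x_k-x^\star)^\top Q(x_k-x^\star)+\tfrac12(\xi_k-\xi^\star)^\top K_I(\xi_k-\xi^\star)+\tfrac12(x_k-x^\star)^\top\mathcal{C}^\top K_D\mathcal{C}(x_k-x^\star)\big]$ satisfies $V_{k+1}-V_k=-(z_k-x^\star)^\top Q\big[R+g^\star K_P(g^\star)^\top\big]Q(z_k-x^\star)\le0$ along every solution. (ii) If moreover there exists $\alpha>0$ with $R+g^\star K_P(g^\star)^\top>\alpha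 I_n$, then every solution satisfies $\lim_{k\to\infty}z_k=x^\star$ (and hence $\lim_{k\to\infty}y_k=(g^\star)^\top Qx^\star$ where $y_k=(g^\star)^\top Qz_k$).
   Context: Power converter model: fix integers $n,m\ge1$, a symmetric positive definite $Q\in\mathbb{R}^{n\times n}$, skew-symmetric $J_0,\dots,J_m\in\mathbb{R}^{n\times n}$, symmetric positive semidefinite $R\in\mathbb{R}^{n\times n}$, matrices $G_0,\dots,G_m\in\mathbb{R}^{n\times n}$, and $E\in\mathbb{R}^n$. Define $f(x):=(J_0-R)Qx+G_0E$ and $g(x)\in\mathbb{R}^{n\times m}$ with $i$-th column $J_iQx+G_iE$. $I_n$ is the $n\times n$ identity; for symmetric matrices $A>B$ means $A-B$ is positive definite. *)

theory Defs
  imports "HOL-Analysis.Analysis"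
begin

definition sym_pos_def :: "real^'n^'n \<Rightarrow> bool" where
  "sym_pos_def A \<longleftrightarrow> transpose A = A \<and> (\<forall>v. v \<noteq> 0 \<longrightarrow> v \<bullet> (A *v v) > 0)"

definition sym_pos_semidef :: "real^'n^'n \<Rightarrow> bool" where
  "sym_pos_semidef A \<longleftrightarrow> transpose A = A \<and> (\<forall>v. v \<bullet> (A *v v) \<ge> 0)"

definition skew :: "real^'n^'n \<Rightarrow> bool" where
  "skew A \<longleftrightarrow> transpose A = - A"

definition pc_f :: "real^'n^'n \<Rightarrow> real^'n^'n \<Rightarrow> real^'n^'n \<Rightarrow> real^'n^'n \<Rightarrow> real^'n
    \<Rightarrow> real^'n \<Rightarrow> real^'n" where
  "pc_f Q J0 R G0 E x = ((J0 - R) ** Q) *v x + G0 *v E"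

definition pc_g :: "real^'n^'n \<Rightarrow> ('m \<Rightarrow> real^'n^'n) \<Rightarrow> ('m \<Rightarrow> real^'n^'n) \<Rightarrow> real^'n
    \<Rightarrow> real^'n \<Rightarrow> real^'m^'n" where
  "pc_g Q J G E x = (\<chi> r i. ((J i ** Q) *v x + G i *v E) $ r)"

end

theory Submission
  imports Defs
begin

text \<open>
  The closed loop is the implicit midpoint discretisation, for which quadratic forms obey an
  exact discrete chain rule: for symmetric M, q(x') - q(x) = 2 (x' - x) \<bullet> M (z - x*) with
  z = (x' + x)/2. Hence the increment of V is computed exactly. The skew-symmetric parts of
  the plant do not contribute, and the integral and derivative actions of the controller cancel
  the increments of the corresponding terms of V, leaving
  -(z - x*) \<bullet> Q (R + g* K_P g*^T) Q (z - x*) \<le> 0.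
  Since V is squeezed between two multiples of the squared distance to (x*, \<xi>*), its
  monotonicity yields Lyapunov stability and boundedness. Under the damping bound the decrease
  dominates a multiple of |z_k - x*|^2, and the decreases are summable because V is bounded
  below.
\<close>

lemma inner_matrix_vector_transpose:
  "(x::real^'n) \<bullet> ((A::real^'m^'n) *v y) = (transpose A *v x) \<bullet> y"
  by (metis dot_lmul_matrix transpose_matrix_vector)

lemma inner_congruence:
  "(x::real^'n) \<bullet> ((transpose (C::real^'n^'m) ** M ** C) *v y) = (C *v x) \<bullet> (M *v (C *v y))"
  by (metis inner_matrix_vector_transpose matrix_vector_mul_assoc transpose_transpose)

lemma inner_symmetric_matrix_commute:
  "transpose A = A \<Longrightarrow> (x::real^'n) \<bullet> ((A::real^'n^'n) *v y) = y \<bullet> (A *v x)"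
  by (metis inner_matrix_vector_transpose inner_commute)

lemma skew_quadratic_form:
  assumes "skew A"
  shows "(x::real^'n) \<bullet> (A *v x) = 0"
proof -
  have "(- A) *v x = - (A *v x)"
    by (simp add: vec_eq_iff matrix_vector_mult_def sum_negf)
  then have "x \<bullet> (A *v x) = - (x \<bullet> (A *v x))"
    using assms by (metis inner_matrix_vector_transpose inner_commute skew_def inner_minus_right)
  then show ?thesis by simp
qed

lemma sym_pos_semidef_quadratic_form_nonneg: "sym_pos_semidef A \<Longrightarrow> 0 \<le> v \<bullet> (A *v v)"
  unfolding sym_pos_semidef_def by auto

lemma sym_pos_def_imp_semidef: "sym_pos_def A \<Longrightarrow> sym_pos_semidef A"
  unfolding sym_pos_def_def sym_pos_semidef_def by (metis inner_zero_left order.refl less_imp_le)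

lemma quadratic_form_diff_midpoint:
  assumes "transpose M = M"
  shows "(a - c) \<bullet> ((M::real^'n^'n) *v (a - c)) - (b - c) \<bullet> (M *v (b - c))
     = 2 * ((a - b) \<bullet> (M *v ((1/2) *\<^sub>R (a + b) - c)))"
proof -
  have "(a - c) \<bullet> (M *v (b - c)) = (b - c) \<bullet> (M *v (a - c))"
    using assms by (rule inner_symmetric_matrix_commute)
  moreover have "(1/2) *\<^sub>R (a + b) - c = (1/2) *\<^sub>R ((a - c) + (b - c))"
    by (simp add: vec_eq_iff field_simps)
  ultimately show ?thesis
    by (simp add: algebra_simps inner_diff_left inner_add_right)
qed

lemma sym_pos_def_coercive:
  assumes "sym_pos_def (A::real^'n^'n)"
  obtains c where "c > 0" "\<And>v. c * (norm v)\<^sup>2 \<le> v \<bullet> (A *v v)"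
proof -
  have "continuous_on (sphere 0 1) (\<lambda>v. v \<bullet> (A *v v))"
    by (intro continuous_intros linear_continuous_on matrix_vector_mul_bounded_linear)
  moreover have "axis undefined 1 \<in> sphere (0::real^'n) 1"
    by (simp add: norm_axis_1)
  ultimately obtain v0 where v0: "norm v0 = 1"
    and min: "\<And>v. norm v = 1 \<Longrightarrow> v0 \<bullet> (A *v v0) \<le> v \<bullet> (A *v v)"
    using continuous_attains_inf[OF compact_sphere, of 0 1] by (metis mem_sphere_0 empty_iff)
  have "v0 \<bullet> (A *v v0) > 0"
    using assms v0 unfolding sym_pos_def_def by (metis norm_zero zero_neq_one)
  moreover have "(v0 \<bullet> (A *v v0)) * (norm v)\<^sup>2 \<le> v \<bullet> (A *v v)" for v
  proof (cases "v = 0")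
    case False
    have "v0 \<bullet> (A *v v0) \<le> ((1 / norm v) *\<^sub>R v) \<bullet> (A *v ((1 / norm v) *\<^sub>R v))"
      using False by (intro min) simp
    also have "\<dots> = (v \<bullet> (A *v v)) / (norm v)\<^sup>2"
      by (simp add: matrix_vector_mult_scaleR power2_eq_square)
    finally show ?thesis
      using False by (simp add: pos_le_divide_eq)
  qed simp
  ultimately show thesis by (rule that)
qed

lemma quadratic_form_le_norm_square:
  obtains K where "K \<ge> 0" "\<And>v. v \<bullet> ((A::real^'n^'n) *v v) \<le> K * (norm v)\<^sup>2"
proof -
  obtain K where K: "K > 0" "\<And>x. norm (A *v x) \<le> norm x * K"
    using bounded_linear.pos_bounded[OF matrix_vector_mul_bounded_linear] by blast
  have "v \<bullet> (A *v v) \<le> K * (norm v)\<^sup>2" for v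
  proof -
    have "v \<bullet> (A *v v) \<le> norm v * norm (A *v v)" by (rule norm_cauchy_schwarz)
    also have "\<dots> \<le> norm v * (norm v * K)" by (intro mult_left_mono K(2)) simp
    finally show ?thesis by (simp add: power2_eq_square algebra_simps)
  qed
  with K(1) show thesis by (intro that[of K]) simp_all
qed

lemma sym_pos_def_norm_lower_bound:
  assumes "sym_pos_def (A::real^'n^'n)"
  obtains c where "c > 0" "\<And>v. c * norm v \<le> norm (A *v v)"
proof -
  obtain c where c: "c > 0" "\<And>v. c * (norm v)\<^sup>2 \<le> v \<bullet> (A *v v)"
    using sym_pos_def_coercive[OF assms] by blast
  have "c * norm v \<le> norm (A *v v)" for v
  proof (cases "v = 0")
    case False
    have "c * (norm v)\<^sup>2 \<le> norm v * norm (A *v v)"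
      using c(2)[of v] norm_cauchy_schwarz[of v "A *v v"] by linarith
    then show ?thesis using False by (simp add: power2_eq_square)
  qed simp
  with c(1) show thesis by (intro that[of c]) simp_all
qed

lemma sym_pos_def_shift_lower_bound:
  assumes "sym_pos_def (M - \<alpha> *\<^sub>R mat 1)"
  shows "\<alpha> * (norm w)\<^sup>2 \<le> (w::real^'n) \<bullet> (M *v w)"
proof -
  have "0 \<le> w \<bullet> ((M - \<alpha> *\<^sub>R mat 1) *v w)"
    using sym_pos_semidef_quadratic_form_nonneg[OF sym_pos_def_imp_semidef[OF assms]] .
  also have "\<dots> = w \<bullet> (M *v w) - \<alpha> * (norm w)\<^sup>2"
    by (simp add: matrix_vector_mult_diff_rdistrib inner_diff_right power2_norm_eq_inner
        flip: scaleR_matrix_vector_assoc)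
  finally show ?thesis by simp
qed

lemma sym_pos_def_right_inverse:
  assumes "sym_pos_def (A::real^'n^'n)"
  shows "A ** matrix_inv A = mat 1"
proof -
  have "\<forall>x. A *v x = 0 \<longrightarrow> x = 0"
    using assms unfolding sym_pos_def_def by (metis inner_zero_right less_irrefl)
  then have "invertible A"
    by (simp add: matrix_left_invertible_ker invertible_left_inverse)
  then show ?thesis
    unfolding invertible_def matrix_inv_def by (rule someI_ex[THEN conjunct1])
qed

lemma lyapunov_dist_bound:
  fixes p :: "nat \<Rightarrow> 'a::metric_space"
  assumes c: "c > 0"
    and lower: "\<And>y. c * (dist y p0)\<^sup>2 \<le> W y"
    and upper: "\<And>y. W y \<le> K * (dist y p0)\<^sup>2"
    and nonincreasing: "\<And>k. W (p (Suc k)) \<le> W (p k)"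
  shows "dist (p k) p0 \<le> sqrt (K / c) * dist (p 0) p0"
proof -
  have "decseq (\<lambda>k. W (p k))"
    using nonincreasing by (rule decseq_SucI)
  then have "c * (dist (p k) p0)\<^sup>2 \<le> K * (dist (p 0) p0)\<^sup>2"
    using lower[of "p k"] upper[of "p 0"] decseqD[of _ 0 k] by fastforce
  then have "(dist (p k) p0)\<^sup>2 \<le> (K / c) * (dist (p 0) p0)\<^sup>2"
    using c by (simp add: field_simps)
  then have "dist (p k) p0 \<le> sqrt ((K / c) * (dist (p 0) p0)\<^sup>2)"
    by (rule real_le_rsqrt)
  also have "\<dots> = sqrt (K / c) * dist (p 0) p0"
    by (subst real_sqrt_mult) simp
  finally show ?thesis .
qed

lemma tendsto_zero_of_dissipation:
  fixes z :: "nat \<Rightarrow> 'a::real_normed_vector"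
  assumes c: "c > 0"
    and nonneg: "\<And>k. 0 \<le> W k"
    and dissipation: "\<And>k. c * (norm (z k))\<^sup>2 \<le> W k - W (Suc k)"
  shows "z \<longlonglongrightarrow> 0"
proof -
  have "0 \<le> c * (norm (z k))\<^sup>2" for k
    using c by simp
  then have "decseq W"
    using dissipation by (intro decseq_SucI) (meson diff_ge_0_iff_ge order_trans)
  then obtain L where L: "W \<longlonglongrightarrow> L"
    using nonneg decseq_convergent by blast
  have "(\<lambda>k. W k - W (Suc k)) \<longlonglongrightarrow> L - L"
    by (rule tendsto_diff[OF L LIMSEQ_Suc[OF L]])
  then have "(\<lambda>k. (W k - W (Suc k)) / c) \<longlonglongrightarrow> 0"
    by (simp add: tendsto_divide_zero)
  then have "(\<lambda>k. (norm (z k))\<^sup>2) \<longlonglongrightarrow> 0"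
    by (rule tendsto_sandwich[rotated 2, OF tendsto_const])
       (use c dissipation in \<open>auto simp: pos_le_divide_eq mult.commute\<close>)
  then have "(\<lambda>k. sqrt ((norm (z k))\<^sup>2)) \<longlonglongrightarrow> sqrt 0"
    by (rule tendsto_real_sqrt)
  then show ?thesis
    by (simp add: tendsto_norm_zero_iff)
qed

lemma pc_f_shift:
  "pc_f Q J0 R G0 E z = pc_f Q J0 R G0 E xs + (J0 - R) *v (Q *v (z - xs))"
  unfolding pc_f_def by (simp add: matrix_vector_mul_assoc[symmetric] matrix_vector_mult_diff_distrib)

lemma pc_g_mult_shift:
  "pc_g Q J G E z *v u = pc_g Q J G E xs *v u + (\<Sum>i\<in>UNIV. u$i *\<^sub>R (J i *v (Q *v (z - xs))))"
proof -
  have "pc_g Q J G E y *v u = (\<Sum>i\<in>UNIV. u$i *\<^sub>R ((J i ** Q) *v y + G i *v E))" for y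
    by (simp add: pc_g_def vec_eq_iff matrix_vector_mult_def sum_component mult.commute)
  moreover have "(J i ** Q) *v z = (J i ** Q) *v xs + J i *v (Q *v (z - xs))" for i
    by (simp add: matrix_vector_mul_assoc matrix_vector_mult_diff_distrib)
  ultimately show ?thesis
    by (simp add: scaleR_add_right add_ac flip: sum.distrib)
qed

locale pc_closed_loop_setting =
  fixes Q R J0 G0 :: "real^('n::finite)^'n"
    and J G :: "('m::finite) \<Rightarrow> real^'n^'n"
    and E xs :: "real^'n" and us :: "real^'m"
    and \<delta> :: real
    and KP KI KD :: "real^'m^'m"
  assumes Q: "sym_pos_def Q"
    and J0: "skew J0" and J: "\<And>i. skew (J i)"
    and R: "sym_pos_semidef R"
    and delta: "\<delta> > 0"
    and eq: "pc_f Q J0 R G0 E xs + pc_g Q J G E xs *v us = 0"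
    and KP: "sym_pos_def KP" and KI: "sym_pos_def KI" and KD: "sym_pos_semidef KD"
begin

abbreviation "gstar \<equiv> pc_g Q J G E xs"
abbreviation "C \<equiv> transpose gstar ** Q"
abbreviation "xi_star \<equiv> - (matrix_inv KI *v us)"
abbreviation "damping \<equiv> R + gstar ** KP ** transpose gstar"

definition closed_loop_step :: "real^'n \<Rightarrow> real^'m \<Rightarrow> real^'m \<Rightarrow> real^'n \<Rightarrow> real^'m \<Rightarrow> bool" where
  "closed_loop_step x0 \<xi>0 u x1 \<xi>1 \<longleftrightarrow>
    (let z = (1/2) *\<^sub>R (x1 + x0); yt = C *v (z - xs) in
       x1 = x0 + \<delta> *\<^sub>R pc_f Q J0 R G0 E z + \<delta> *\<^sub>R (pc_g Q J G E z *v u)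
     \<and> \<xi>1 = \<xi>0 + \<delta> *\<^sub>R yt
     \<and> u = - (KP *v yt) - (1/2) *\<^sub>R (KI *v (\<xi>1 + \<xi>0)) - (1/\<delta>) *\<^sub>R (KD *v (C *v (x1 - x0))))"

definition closed_loop :: "(nat \<Rightarrow> real^'n) \<Rightarrow> (nat \<Rightarrow> real^'m) \<Rightarrow> (nat \<Rightarrow> real^'m) \<Rightarrow> bool" where
  "closed_loop x \<xi> u \<longleftrightarrow> (\<forall>k. closed_loop_step (x k) (\<xi> k) (u k) (x (Suc k)) (\<xi> (Suc k)))"

definition lyapunov :: "real^'n \<Rightarrow> real^'m \<Rightarrow> real" where
  "lyapunov x \<xi> = (1/\<delta>) *
     ((1/2) * ((x - xs) \<bullet> (Q *v (x - xs)))
    + (1/2) * ((\<xi> - xi_star) \<bullet> (KI *v (\<xi> - xi_star)))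
    + (1/2) * ((x - xs) \<bullet> ((transpose C ** KD ** C) *v (x - xs))))"

lemma Q_symmetric: "transpose Q = Q"
  using Q unfolding sym_pos_def_def by simp

lemma KI_symmetric: "transpose KI = KI"
  using KI unfolding sym_pos_def_def by simp

lemma KD_symmetric: "transpose KD = KD"
  using KD unfolding sym_pos_semidef_def by simp

lemma KI_matrix_inv: "KI *v (matrix_inv KI *v v) = v"
proof -
  have "KI *v (matrix_inv KI *v v) = (KI ** matrix_inv KI) *v v"
    by (rule matrix_vector_mul_assoc)
  then show ?thesis
    by (simp add: sym_pos_def_right_inverse[OF KI])
qed

lemma KI_xi_star: "KI *v xi_star = - us"
proof -
  have "KI *v xi_star = - (KI *v (matrix_inv KI *v us))"
    by (simp add: vec_eq_iff matrix_vector_mult_def sum_negf)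
  then show ?thesis
    by (simp only: KI_matrix_inv)
qed

text \<open>With w = Q (z - x*), the skew-symmetric J_0, J_i drop out of w \<bullet> (f z + g z u), and the
  equilibrium equation removes the constant part of the vector field.\<close>

lemma power_balance:
  "(Q *v (z - xs)) \<bullet> (pc_f Q J0 R G0 E z + pc_g Q J G E z *v u)
     = - ((Q *v (z - xs)) \<bullet> (R *v (Q *v (z - xs)))) + (C *v (z - xs)) \<bullet> (u - us)"
proof -
  define w where "w = Q *v (z - xs)"
  have "pc_f Q J0 R G0 E z + pc_g Q J G E z *v u
      = (J0 - R) *v w + (\<Sum>i\<in>UNIV. u$i *\<^sub>R (J i *v w)) + gstar *v (u - us)"
    using eq unfolding pc_f_shift[of _ _ _ _ _ z xs] pc_g_mult_shift[of _ _ _ _ z _ xs] w_def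
    by (simp add: matrix_vector_mult_diff_distrib algebra_simps)
  moreover have "w \<bullet> (\<Sum>i\<in>UNIV. u$i *\<^sub>R (J i *v w)) = 0"
    by (simp add: inner_sum_right skew_quadratic_form[OF J])
  moreover have "w \<bullet> ((J0 - R) *v w) = - (w \<bullet> (R *v w))"
    by (simp add: matrix_vector_mult_diff_rdistrib inner_diff_right skew_quadratic_form[OF J0])
  moreover have "w \<bullet> (gstar *v (u - us)) = (C *v (z - xs)) \<bullet> (u - us)"
    unfolding w_def by (metis inner_matrix_vector_transpose matrix_vector_mul_assoc)
  ultimately show ?thesis
    by (simp add: w_def inner_add_right)
qed

lemma damping_quadratic_form:
  "zt \<bullet> ((Q ** damping ** Q) *v zt)
     = (Q *v zt) \<bullet> (R *v (Q *v zt)) + (C *v zt) \<bullet> (KP *v (C *v zt))"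
proof -
  have "zt \<bullet> ((Q ** damping ** Q) *v zt) = (Q *v zt) \<bullet> (damping *v (Q *v zt))"
    using inner_congruence[of zt Q damping] by (simp only: Q_symmetric)
  also have "\<dots> = (Q *v zt) \<bullet> (R *v (Q *v zt))
      + (Q *v zt) \<bullet> ((transpose (transpose gstar) ** KP ** transpose gstar) *v (Q *v zt))"
    by (simp add: matrix_vector_mult_add_rdistrib inner_add_right)
  also have "\<dots> = (Q *v zt) \<bullet> (R *v (Q *v zt)) + (C *v zt) \<bullet> (KP *v (C *v zt))"
    by (simp only: inner_congruence matrix_vector_mul_assoc[of "transpose gstar" Q zt])
  finally show ?thesis .
qed

lemma damping_quadratic_form_nonneg: "0 \<le> zt \<bullet> ((Q ** damping ** Q) *v zt)"
  unfolding damping_quadratic_form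
  using sym_pos_semidef_quadratic_form_nonneg[OF R]
    sym_pos_semidef_quadratic_form_nonneg[OF sym_pos_def_imp_semidef[OF KP]]
  by (simp add: add_nonneg_nonneg)

lemma lyapunov_diff_midpoint:
  "lyapunov x1 \<xi>1 - lyapunov x0 \<xi>0 = (1/\<delta>) *
     ((x1 - x0) \<bullet> (Q *v ((1/2) *\<^sub>R (x1 + x0) - xs))
    + (\<xi>1 - \<xi>0) \<bullet> (KI *v ((1/2) *\<^sub>R (\<xi>1 + \<xi>0) - xi_star))
    + (C *v (x1 - x0)) \<bullet> (KD *v (C *v ((1/2) *\<^sub>R (x1 + x0) - xs))))"
proof -
  have "transpose (transpose C ** KD ** C) = transpose C ** KD ** C"
    by (simp add: matrix_transpose_mul KD_symmetric matrix_mul_assoc)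
  from quadratic_form_diff_midpoint[OF this, of x1 xs x0]
    quadratic_form_diff_midpoint[OF Q_symmetric, of x1 xs x0]
    quadratic_form_diff_midpoint[OF KI_symmetric, of \<xi>1 xi_star \<xi>0]
  show ?thesis
    unfolding lyapunov_def right_diff_distrib[symmetric] inner_congruence
    by (intro arg_cong[where f = "\<lambda>t. (1/\<delta>) * t"]) linarith
qed

lemma lyapunov_step:
  assumes "closed_loop_step x0 \<xi>0 u x1 \<xi>1"
  shows "lyapunov x1 \<xi>1 - lyapunov x0 \<xi>0
    = - (((1/2) *\<^sub>R (x1 + x0) - xs) \<bullet> ((Q ** damping ** Q) *v ((1/2) *\<^sub>R (x1 + x0) - xs)))"
proof -
  define z zt yt m where "z = (1/2) *\<^sub>R (x1 + x0)" and "zt = z - xs" and "yt = C *v zt"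
    and "m = (1/2) *\<^sub>R (\<xi>1 + \<xi>0) - xi_star"
  have x1: "x1 = x0 + \<delta> *\<^sub>R pc_f Q J0 R G0 E z + \<delta> *\<^sub>R (pc_g Q J G E z *v u)"
    and \<xi>1: "\<xi>1 = \<xi>0 + \<delta> *\<^sub>R yt"
    and u: "u = - (KP *v yt) - (1/2) *\<^sub>R (KI *v (\<xi>1 + \<xi>0)) - (1/\<delta>) *\<^sub>R (KD *v (C *v (x1 - x0)))"
    using assms unfolding closed_loop_step_def Let_def z_def[symmetric] zt_def[symmetric] yt_def[symmetric]
    by blast+
  have \<xi>_diff: "\<xi>1 - \<xi>0 = \<delta> *\<^sub>R yt"
    using \<xi>1 by simp
  have balance: "(x1 - x0) \<bullet> (Q *v zt) = \<delta> * (- ((Q *v zt) \<bullet> (R *v (Q *v zt))) + yt \<bullet> (u - us))"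
    using power_balance[of z u] x1 unfolding zt_def yt_def
    by (simp add: inner_commute flip: scaleR_add_right)
  have "u - us = - (KP *v yt) - KI *v m - (1/\<delta>) *\<^sub>R (KD *v (C *v (x1 - x0)))"
    unfolding u m_def by (simp add: algebra_simps KI_matrix_inv)
  then have supplied: "yt \<bullet> (u - us)
      = - (yt \<bullet> (KP *v yt)) - yt \<bullet> (KI *v m) - (1/\<delta>) * ((C *v (x1 - x0)) \<bullet> (KD *v yt))"
    using inner_symmetric_matrix_commute[OF KD_symmetric, of yt "C *v (x1 - x0)"]
    by (simp add: inner_diff_right)
  have "lyapunov x1 \<xi>1 - lyapunov x0 \<xi>0
      = (1/\<delta>) * ((x1 - x0) \<bullet> (Q *v zt) + \<delta> * (yt \<bullet> (KI *v m)) + (C *v (x1 - x0)) \<bullet> (KD *v yt))"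
    unfolding lyapunov_diff_midpoint z_def[symmetric] zt_def[symmetric] yt_def[symmetric] m_def[symmetric]
      \<xi>_diff inner_scaleR_left ..
  also have "\<dots> = - ((Q *v zt) \<bullet> (R *v (Q *v zt))) - yt \<bullet> (KP *v yt)"
  proof -
    have "(1/\<delta>) * (\<delta> * (- r + (- p - i - (1/\<delta>) * d)) + \<delta> * i + d) = - r - p" for r p i d
      using delta by (simp add: field_simps)
    then show ?thesis
      unfolding balance supplied .
  qed
  finally show ?thesis
    unfolding damping_quadratic_form z_def[symmetric] zt_def[symmetric] yt_def[symmetric] by simp
qed

lemma lyapunov_nonincreasing:
  assumes "closed_loop_step x0 \<xi>0 u x1 \<xi>1"
  shows "lyapunov x1 \<xi>1 \<le> lyapunov x0 \<xi>0"
  using lyapunov_step[OF assms] damping_quadratic_form_nonneg[of "(1/2) *\<^sub>R (x1 + x0) - xs"]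
  by linarith

lemma lyapunov_nonneg: "0 \<le> lyapunov x \<xi>"
proof -
  have "0 \<le> (x - xs) \<bullet> ((transpose C ** KD ** C) *v (x - xs))"
    unfolding inner_congruence by (rule sym_pos_semidef_quadratic_form_nonneg[OF KD])
  then show ?thesis
    unfolding lyapunov_def using delta
      sym_pos_semidef_quadratic_form_nonneg[OF sym_pos_def_imp_semidef[OF Q], of "x - xs"]
      sym_pos_semidef_quadratic_form_nonneg[OF sym_pos_def_imp_semidef[OF KI], of "\<xi> - xi_star"]
    by simp
qed

lemma lyapunov_bounds:
  obtains c K where "c > 0" "K \<ge> 0"
    "\<And>x \<xi>. c * (dist (x, \<xi>) (xs, xi_star))\<^sup>2 \<le> lyapunov x \<xi>"
    "\<And>x \<xi>. lyapunov x \<xi> \<le> K * (dist (x, \<xi>) (xs, xi_star))\<^sup>2"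
proof -
  obtain cQ where cQ: "cQ > 0" "\<And>v. cQ * (norm v)\<^sup>2 \<le> v \<bullet> (Q *v v)"
    using sym_pos_def_coercive[OF Q] by blast
  obtain cI where cI: "cI > 0" "\<And>v. cI * (norm v)\<^sup>2 \<le> v \<bullet> (KI *v v)"
    using sym_pos_def_coercive[OF KI] by blast
  obtain kQ where kQ: "kQ \<ge> 0" "\<And>v. v \<bullet> (Q *v v) \<le> kQ * (norm v)\<^sup>2"
    using quadratic_form_le_norm_square by blast
  obtain kI where kI: "kI \<ge> 0" "\<And>v. v \<bullet> (KI *v v) \<le> kI * (norm v)\<^sup>2"
    using quadratic_form_le_norm_square by blast
  obtain kD where kD: "kD \<ge> 0" "\<And>v. v \<bullet> ((transpose C ** KD ** C) *v v) \<le> kD * (norm v)\<^sup>2"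
    using quadratic_form_le_norm_square by blast
  define c K where "c = min cQ cI / (2 * \<delta>)" and "K = (kQ + kI + kD) / (2 * \<delta>)"
  have "c * (dist (x, \<xi>) (xs, xi_star))\<^sup>2 \<le> lyapunov x \<xi> \<and> lyapunov x \<xi> \<le> K * (dist (x, \<xi>) (xs, xi_star))\<^sup>2"
    for x \<xi>
  proof -
    define a b d p q where "a = (x - xs) \<bullet> (Q *v (x - xs))"
      and "b = (\<xi> - xi_star) \<bullet> (KI *v (\<xi> - xi_star))"
      and "d = (x - xs) \<bullet> ((transpose C ** KD ** C) *v (x - xs))"
      and "p = (norm (x - xs))\<^sup>2" and "q = (norm (\<xi> - xi_star))\<^sup>2"
    have dist: "(dist (x, \<xi>) (xs, xi_star))\<^sup>2 = p + q"
      unfolding p_def q_def by (simp add: dist_Pair_Pair dist_norm norm_Pair)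
    have V: "lyapunov x \<xi> = (a + b + d) / (2 * \<delta>)"
      unfolding lyapunov_def a_def b_def d_def using delta by (simp add: field_simps)
    have "cQ * p \<le> a" "cI * q \<le> b" "a \<le> kQ * p" "b \<le> kI * q" "d \<le> kD * p"
      unfolding a_def b_def d_def p_def q_def by (fact cQ(2) cI(2) kQ(2) kI(2) kD(2))+
    moreover have "0 \<le> d"
      unfolding d_def inner_congruence
      by (rule sym_pos_semidef_quadratic_form_nonneg[OF KD])
    moreover have "p \<ge> 0" "q \<ge> 0"
      unfolding p_def q_def by simp_all
    moreover have "min cQ cI * p \<le> cQ * p" "min cQ cI * q \<le> cI * q"
      using \<open>p \<ge> 0\<close> \<open>q \<ge> 0\<close> by (simp_all add: mult_right_mono)
    moreover have "0 \<le> kQ * q" "0 \<le> kI * p" "0 \<le> kD * q"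
      using \<open>p \<ge> 0\<close> \<open>q \<ge> 0\<close> kQ(1) kI(1) kD(1) by simp_all
    ultimately have "min cQ cI * (p + q) \<le> a + b + d" and "a + b + d \<le> (kQ + kI + kD) * (p + q)"
      by (simp_all add: algebra_simps)
    then show ?thesis
      unfolding dist V c_def K_def using delta by (simp add: divide_right_mono)
  qed
  moreover have "c > 0" "K \<ge> 0"
    unfolding c_def K_def using cQ cI kQ kI kD delta by simp_all
  ultimately show thesis
    using that by blast
qed

lemma equilibrium: "closed_loop (\<lambda>_. xs) (\<lambda>_. xi_star) (\<lambda>_. us)"
proof -
  have "\<delta> *\<^sub>R pc_f Q J0 R G0 E xs + \<delta> *\<^sub>R (pc_g Q J G E xs *v us) = 0"
    using eq by (simp flip: scaleR_add_right)
  moreover have "(1/2) *\<^sub>R (KI *v (xi_star + xi_star)) = - us"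
    by (simp only: matrix_vector_right_distrib KI_xi_star scaleR_half_double)
  ultimately show ?thesis
    unfolding closed_loop_def closed_loop_step_def Let_def by (simp add: add.assoc)
qed

lemma closed_loop_dist_bound:
  obtains L where "L \<ge> 0"
    "\<And>x \<xi> u k. closed_loop x \<xi> u \<Longrightarrow>
       dist (x k, \<xi> k) (xs, xi_star) \<le> L * dist (x 0, \<xi> 0) (xs, xi_star)"
proof -
  obtain c K where c: "c > 0" "K \<ge> 0"
    and lower: "\<And>x \<xi>. c * (dist (x, \<xi>) (xs, xi_star))\<^sup>2 \<le> lyapunov x \<xi>"
    and upper: "\<And>x \<xi>. lyapunov x \<xi> \<le> K * (dist (x, \<xi>) (xs, xi_star))\<^sup>2"
    using lyapunov_bounds by blast
  have "dist (x k, \<xi> k) (xs, xi_star) \<le> sqrt (K / c) * dist (x 0, \<xi> 0) (xs, xi_star)"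
    if "closed_loop x \<xi> u" for x \<xi> u k
    using that unfolding closed_loop_def
    by (intro lyapunov_dist_bound[where W = "case_prod lyapunov" and p = "\<lambda>k. (x k, \<xi> k)", simplified])
       (auto simp: split_paired_all c lower upper intro: lyapunov_nonincreasing)
  with c show thesis
    by (intro that[of "sqrt (K / c)"]) simp_all
qed

lemma closed_loop_stable:
  "\<forall>\<epsilon>>0. \<exists>\<eta>>0. \<forall>x \<xi> u. closed_loop x \<xi> u \<and> dist (x 0, \<xi> 0) (xs, xi_star) < \<eta>
     \<longrightarrow> (\<forall>k. dist (x k, \<xi> k) (xs, xi_star) < \<epsilon>)"
proof (intro allI impI)
  fix \<epsilon> :: real
  assume \<epsilon>: "\<epsilon> > 0"
  obtain L where L: "L \<ge> 0" and bound: "\<And>x \<xi> u k. closed_loop x \<xi> u \<Longrightarrow>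
       dist (x k, \<xi> k) (xs, xi_star) \<le> L * dist (x 0, \<xi> 0) (xs, xi_star)"
    using closed_loop_dist_bound by blast
  show "\<exists>\<eta>>0. \<forall>x \<xi> u. closed_loop x \<xi> u \<and> dist (x 0, \<xi> 0) (xs, xi_star) < \<eta>
     \<longrightarrow> (\<forall>k. dist (x k, \<xi> k) (xs, xi_star) < \<epsilon>)"
  proof (intro exI[of _ "\<epsilon> / (L + 1)"] conjI allI impI)
    show "\<epsilon> / (L + 1) > 0"
      using \<epsilon> L by simp
    fix x \<xi> u k
    assume "closed_loop x \<xi> u \<and> dist (x 0, \<xi> 0) (xs, xi_star) < \<epsilon> / (L + 1)"
    then have "dist (x k, \<xi> k) (xs, xi_star) \<le> L * (\<epsilon> / (L + 1))"
      using bound L by (meson less_imp_le mult_left_mono order_trans)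
    also have "\<dots> < \<epsilon>"
      using \<epsilon> L by (simp add: field_simps)
    finally show "dist (x k, \<xi> k) (xs, xi_star) < \<epsilon>" .
  qed
qed

lemma closed_loop_bounded:
  assumes "closed_loop x \<xi> u"
  shows "\<exists>B. \<forall>k. norm (x k, \<xi> k) \<le> B"
proof -
  obtain L where bound: "\<And>k. dist (x k, \<xi> k) (xs, xi_star) \<le> L * dist (x 0, \<xi> 0) (xs, xi_star)"
    using closed_loop_dist_bound assms by metis
  have "norm (x k, \<xi> k) \<le> norm (xs, xi_star) + dist (x k, \<xi> k) (xs, xi_star)" for k
    by (metis dist_norm norm_triangle_sub)
  with bound show ?thesis
    by (meson add_left_mono order_trans)
qed

lemma closed_loop_lyapunov_decrease:
  assumes "closed_loop x \<xi> u"
  shows "lyapunov (x (Suc k)) (\<xi> (Suc k)) - lyapunov (x k) (\<xi> k)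
      = - (((1/2) *\<^sub>R (x (Suc k) + x k) - xs) \<bullet>
           ((Q ** damping ** Q) *v ((1/2) *\<^sub>R (x (Suc k) + x k) - xs)))
    \<and> lyapunov (x (Suc k)) (\<xi> (Suc k)) - lyapunov (x k) (\<xi> k) \<le> 0"
proof -
  have "closed_loop_step (x k) (\<xi> k) (u k) (x (Suc k)) (\<xi> (Suc k))"
    using assms unfolding closed_loop_def ..
  then show ?thesis
    using lyapunov_step damping_quadratic_form_nonneg by simp
qed

lemma closed_loop_tendsto:
  assumes "\<exists>\<alpha>>0. sym_pos_def (damping - \<alpha> *\<^sub>R mat 1)" and "closed_loop x \<xi> u"
  shows "(\<lambda>k. (1/2) *\<^sub>R (x (Suc k) + x k)) \<longlonglongrightarrow> xs
    \<and> (\<lambda>k. C *v ((1/2) *\<^sub>R (x (Suc k) + x k))) \<longlonglongrightarrow> C *v xs"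
proof -
  obtain \<alpha> where \<alpha>: "\<alpha> > 0" and pd: "sym_pos_def (damping - \<alpha> *\<^sub>R mat 1)"
    using assms(1) by blast
  obtain cQ where cQ: "cQ > 0" "\<And>v. cQ * norm v \<le> norm (Q *v v)"
    using sym_pos_def_norm_lower_bound[OF Q] by blast
  define zt where "zt k = (1/2) *\<^sub>R (x (Suc k) + x k) - xs" for k
  have rate: "\<alpha> * cQ\<^sup>2 > 0"
    using \<alpha> cQ by simp
  have dissipation: "(\<alpha> * cQ\<^sup>2) * (norm (zt k))\<^sup>2 \<le> lyapunov (x k) (\<xi> k) - lyapunov (x (Suc k)) (\<xi> (Suc k))"
    for k
  proof -
    have "(\<alpha> * cQ\<^sup>2) * (norm (zt k))\<^sup>2 = \<alpha> * (cQ * norm (zt k))\<^sup>2"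
      by (simp add: power_mult_distrib)
    also have "\<dots> \<le> \<alpha> * (norm (Q *v zt k))\<^sup>2"
      using cQ \<alpha> by (intro mult_left_mono power_mono) auto
    also have "\<dots> \<le> (Q *v zt k) \<bullet> (damping *v (Q *v zt k))"
      by (rule sym_pos_def_shift_lower_bound[OF pd])
    also have "\<dots> = zt k \<bullet> ((Q ** damping ** Q) *v zt k)"
      using inner_congruence[of "zt k" Q damping] by (simp only: Q_symmetric)
    also have "\<dots> = lyapunov (x k) (\<xi> k) - lyapunov (x (Suc k)) (\<xi> (Suc k))"
      using closed_loop_lyapunov_decrease[OF assms(2), of k] unfolding zt_def by linarith
    finally show ?thesis .
  qed
  have "zt \<longlonglongrightarrow> 0"
    by (rule tendsto_zero_of_dissipation[where W = "\<lambda>k. lyapunov (x k) (\<xi> k)", OF rate lyapunov_nonneg dissipation])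
  then have "(\<lambda>k. (1/2) *\<^sub>R (x (Suc k) + x k)) \<longlonglongrightarrow> xs"
    unfolding zt_def by (simp add: LIM_zero_iff)
  moreover from this have "(\<lambda>k. C *v ((1/2) *\<^sub>R (x (Suc k) + x k))) \<longlonglongrightarrow> C *v xs"
    by (rule bounded_linear.tendsto[OF matrix_vector_mul_bounded_linear])
  ultimately show ?thesis ..
qed

end


theorem proposition4:
  fixes Q R J0 G0 :: "real^('n::finite)^'n"
    and J G :: "('m::finite) \<Rightarrow> real^'n^'n"
    and E :: "real^'n"
    and \<delta> :: real
    and xs :: "real^'n" and us :: "real^'m"
    and KP KI KD :: "real^'m^'m"
  assumes Q: "sym_pos_def Q"
    and J0: "skew J0" and J: "\<And>i. skew (J i)"
    and R: "sym_pos_semidef R"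
    and delta: "\<delta> > 0"
    and eq: "pc_f Q J0 R G0 E xs + pc_g Q J G E xs *v us = 0"
    and KP: "sym_pos_def KP" and KI: "sym_pos_def KI" and KD: "sym_pos_semidef KD"
  defines "gs \<equiv> pc_g Q J G E xs"
    and "sol \<equiv> (\<lambda>(x :: nat \<Rightarrow> real^'n) (\<xi> :: nat \<Rightarrow> real^'m) (u :: nat \<Rightarrow> real^'m).
             \<forall>k. let z = (1/2) *\<^sub>R (x (Suc k) + x k); yt = (transpose (pc_g Q J G E xs) ** Q) *v (z - xs) in
               x (Suc k) = x k + \<delta> *\<^sub>R pc_f Q J0 R G0 E z + \<delta> *\<^sub>R (pc_g Q J G E z *v u k)
             \<and> \<xi> (Suc k) = \<xi> k + \<delta> *\<^sub>R yt
             \<and> u k = - (KP *v yt) - (1/2) *\<^sub>R (KI *v (\<xi> (Suc k) + \<xi> k))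
                     - (1/\<delta>) *\<^sub>R (KD *v ((transpose (pc_g Q J G E xs) ** Q) *v (x (Suc k) - x k))))"
    and "V \<equiv> (\<lambda>(x :: real^'n) (\<xi> :: real^'m). (1/\<delta>) *
             ((1/2) * ((x - xs) \<bullet> (Q *v (x - xs)))
            + (1/2) * ((\<xi> - (- (matrix_inv KI *v us))) \<bullet> (KI *v (\<xi> - (- (matrix_inv KI *v us)))))
            + (1/2) * ((x - xs) \<bullet> ((transpose (transpose (pc_g Q J G E xs) ** Q) ** KD ** (transpose (pc_g Q J G E xs) ** Q)) *v (x - xs)))))"
  shows
    \<comment> \<open>(i): (x*, xi*) is an equilibrium, Lyapunov stable, all solutions bounded, and the
        dissipation identity for V\<close>
    "(sol (\<lambda>_. xs) (\<lambda>_. (- (matrix_inv KI *v us))) (\<lambda>_. us))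
     \<and> (\<forall>\<epsilon>>0. \<exists>\<eta>>0. \<forall>x \<xi> u. sol x \<xi> u \<and> dist (x 0, \<xi> 0) (xs, (- (matrix_inv KI *v us))) < \<eta>
                 \<longrightarrow> (\<forall>k. dist (x k, \<xi> k) (xs, (- (matrix_inv KI *v us))) < \<epsilon>))
     \<and> (\<forall>x \<xi> u. sol x \<xi> u \<longrightarrow> (\<exists>B. \<forall>k. norm (x k, \<xi> k) \<le> B))
     \<and> (\<forall>x \<xi> u. sol x \<xi> u \<longrightarrow> (\<forall>k.
            V (x (Suc k)) (\<xi> (Suc k)) - V (x k) (\<xi> k)
              = - (((1/2) *\<^sub>R (x (Suc k) + x k) - xs) \<bullet>
                   ((Q ** (R + gs ** KP ** transpose gs) ** Q) *v ((1/2) *\<^sub>R (x (Suc k) + x k) - xs)))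
          \<and> V (x (Suc k)) (\<xi> (Suc k)) - V (x k) (\<xi> k) \<le> 0))
     \<and> ((\<exists>\<alpha>>0. sym_pos_def (R + gs ** KP ** transpose gs - \<alpha> *\<^sub>R mat 1)) \<longrightarrow>
         (\<forall>x \<xi> u. sol x \<xi> u \<longrightarrow>
            ((\<lambda>k. (1/2) *\<^sub>R (x (Suc k) + x k)) \<longlonglongrightarrow> xs)
          \<and> ((\<lambda>k. (transpose gs ** Q) *v ((1/2) *\<^sub>R (x (Suc k) + x k))) \<longlonglongrightarrow> (transpose gs ** Q) *v xs)))"
proof -
  interpret pc_closed_loop_setting Q R J0 G0 J G E xs us \<delta> KP KI KD
    using assms by unfold_locales
  have sol: "sol = closed_loop"
    unfolding sol_def by (intro ext) (simp only: closed_loop_def closed_loop_step_def)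
  have V: "V = lyapunov"
    unfolding V_def by (intro ext) (simp only: lyapunov_def)
  show ?thesis
    unfolding sol V gs_def
    by (intro conjI equilibrium closed_loop_stable)
      (use closed_loop_bounded closed_loop_lyapunov_decrease closed_loop_tendsto in blast)+
qed

end
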